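(* Let $G$ be a finite group, $R\subseteq\mathbb{R}^G$ the space of real matrix coefficients $R_\rho$ of some self-conjugate representation $\rho$ of $G$, and $W=(A,B,C)$, $A,B,C\in\mathbb{R}^{m\times G}$. Suppose $\{1,\dots,m\}=S_1\sqcup S_2$ such that for $i\in S_1$ the $i$-th rows of $A,B,C$ lie in $R$ and for $i\in S_2$ the $i$-th rows of $A,B,C$ lie in $R^\perp$. Then for every $\eta>0$ the same property (with the same $S_1,S_2$) holds for $\mathrm{GD}(W)$, and hence for $\mathrm{GD}^t(W)$ for all $t\ge0$.
   Context: A representation is a homomorphism $\rho:G\to GL(\mathbb{C}^d)$; it is self-conjugate if isomorphic to its entrywise conjugate. For such $\rho$, $R_\rho\subseteq\mathbb{R}^G$ is the real span of the real and imaginary parts of the functions $g\mapsto\rho(g)_{ij}$, $i,j\in[d]$. $R^\perp$ is the orthogonal complement in $\mathbb{R}^G$ with the standard inner product. The Hadamard model computes $f_{\mathrm{HD}}(x,y;W)=C^T(Ax\odot By)$ ($\odot$ entrywise product); $1_g$ is the indicator vector of $g$; the loss is $L(W)=\frac{1}{|G|^3}\sum_{a,b\in G}\|f_{\mathrm{HD}}(1_a,1_b;W)-1_{ab}\|_2^2$, and $\mathrm{GD}(W)=W-\eta\nabla_WL(W)$ with $\mathrm{GD}^t$ its $t$-fold iterate. *)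

theory Defs
  imports "HOL-Algebra.Group" "Jordan_Normal_Form.Matrix" "Jordan_Normal_Form.Determinant" "HOL-Analysis.Derivative"
begin

definition is_rep :: "('a, 'b) monoid_scheme \<Rightarrow> nat \<Rightarrow> ('a \<Rightarrow> complex mat) \<Rightarrow> bool" where
  "is_rep G d \<rho> \<longleftrightarrow>
     (\<forall>g\<in>carrier G. \<rho> g \<in> carrier_mat d d \<and> invertible_mat (\<rho> g)) \<and>
     (\<forall>g\<in>carrier G. \<forall>h\<in>carrier G. \<rho> (g \<otimes>\<^bsub>G\<^esub> h) = \<rho> g * \<rho> h)"

text \<open>Self-conjugate: isomorphic to the entrywise conjugate representation,
  i.e. there is an invertible intertwiner P with P rho(g) P^-1 = conj(rho(g)).\<close>
definition self_conjugate :: "('a, 'b) monoid_scheme \<Rightarrow> nat \<Rightarrow> ('a \<Rightarrow> complex mat) \<Rightarrow> bool" where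
  "self_conjugate G d \<rho> \<longleftrightarrow>
     (\<exists>P \<in> carrier_mat d d. invertible_mat P \<and>
        (\<forall>g\<in>carrier G. P * \<rho> g = map_mat cnj (\<rho> g) * P))"

text \<open>Membership of a function G -> R (only its values on carrier G matter) in R_rho,
  the real span of the real and imaginary parts of the matrix coefficients.\<close>
definition in_R :: "('a, 'b) monoid_scheme \<Rightarrow> nat \<Rightarrow> ('a \<Rightarrow> complex mat) \<Rightarrow> ('a \<Rightarrow> real) \<Rightarrow> bool" where
  "in_R G d \<rho> v \<longleftrightarrow>
     (\<exists>c c' :: nat \<Rightarrow> nat \<Rightarrow> real. \<forall>g\<in>carrier G.
        v g = (\<Sum>i<d. \<Sum>j<d. c i j * Re (\<rho> g $$ (i, j)) + c' i j * Im (\<rho> g $$ (i, j))))"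

definition in_Rperp :: "('a, 'b) monoid_scheme \<Rightarrow> nat \<Rightarrow> ('a \<Rightarrow> complex mat) \<Rightarrow> ('a \<Rightarrow> real) \<Rightarrow> bool" where
  "in_Rperp G d \<rho> v \<longleftrightarrow>
     (\<forall>f. in_R G d \<rho> f \<longrightarrow> (\<Sum>g\<in>carrier G. v g * f g) = 0)"

text \<open>Weights W = (A, B, C), each a matrix in R^{m x G} given as row index -> group element -> real.\<close>
type_synonym 'a weights = "(nat \<Rightarrow> 'a \<Rightarrow> real) \<times> (nat \<Rightarrow> 'a \<Rightarrow> real) \<times> (nat \<Rightarrow> 'a \<Rightarrow> real)"

text \<open>g-th output coordinate of f_HD(1_a, 1_b; W) = C^T (A 1_a \<odot> B 1_b).\<close>
definition f_HD :: "nat \<Rightarrow> 'a weights \<Rightarrow> 'a \<Rightarrow> 'a \<Rightarrow> 'a \<Rightarrow> real" where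
  "f_HD m W a b g = (case W of (A, B, C) \<Rightarrow> (\<Sum>i<m. C i g * (A i a * B i b)))"

definition loss :: "('a, 'b) monoid_scheme \<Rightarrow> nat \<Rightarrow> 'a weights \<Rightarrow> real" where
  "loss G m W = 1 / real (card (carrier G)) ^ 3 *
     (\<Sum>a\<in>carrier G. \<Sum>b\<in>carrier G. \<Sum>g\<in>carrier G.
        (f_HD m W a b g - (if g = a \<otimes>\<^bsub>G\<^esub> b then 1 else 0))\<^sup>2)"

definition GD :: "('a, 'b) monoid_scheme \<Rightarrow> nat \<Rightarrow> real \<Rightarrow> 'a weights \<Rightarrow> 'a weights" where
  "GD G m \<eta> W = (case W of (A, B, C) \<Rightarrow>
     ((\<lambda>i a. A i a - \<eta> * deriv (\<lambda>t. loss G m (A(i := (A i)(a := t)), B, C)) (A i a)),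
      (\<lambda>i a. B i a - \<eta> * deriv (\<lambda>t. loss G m (A, B(i := (B i)(a := t)), C)) (B i a)),
      (\<lambda>i a. C i a - \<eta> * deriv (\<lambda>t. loss G m (A, B, C(i := (C i)(a := t)))) (C i a))))"

definition rows_split :: "('a, 'b) monoid_scheme \<Rightarrow> nat \<Rightarrow> ('a \<Rightarrow> complex mat) \<Rightarrow> nat set \<Rightarrow> nat set \<Rightarrow> 'a weights \<Rightarrow> bool" where
  "rows_split G d \<rho> S1 S2 W = (case W of (A, B, C) \<Rightarrow>
     (\<forall>i\<in>S1. in_R G d \<rho> (A i) \<and> in_R G d \<rho> (B i) \<and> in_R G d \<rho> (C i)) \<and>
     (\<forall>i\<in>S2. in_Rperp G d \<rho> (A i) \<and> in_Rperp G d \<rho> (B i) \<and> in_Rperp G d \<rho> (C i)))"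

end

theory Submission
  imports Defs
begin

(* The real span R of the matrix coefficients of rho consists of the functions
   g |-> Re tr(Z rho(g)) with Z a complex d x d matrix. Since
   tr(Z rho(a) rho(g) rho(b)) = tr(rho(b) Z rho(a) rho(g)), R is invariant under left and
   right translations, hence so is its orthogonal complement.
   Up to the factor 2/|G|^3, the partial derivative of the loss along row i of A is
   a |-> sum_j <B_j, B_i> <C_j, C_i> A_j(a) - sum_b B_i(b) C_i(ab), and similarly for B and C.
   If row i lies in one of the two spaces, every row j on the other side has <B_j, B_i> = 0,
   so the first term only involves rows on the side of i, while the second is a combination
   of translates of C_i. *)

definition mat_trace :: "'a::comm_ring_1 mat \<Rightarrow> 'a" where
  "mat_trace A = (\<Sum>i<dim_row A. A $$ (i, i))"

lemma mat_trace_mult_comm: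
  assumes "A \<in> carrier_mat n n" "B \<in> carrier_mat n n"
  shows "mat_trace (A * B) = mat_trace (B * A)"
proof -
  have "mat_trace (A * B) = (\<Sum>i<n. \<Sum>j<n. A $$ (i, j) * B $$ (j, i))"
    using assms by (simp add: mat_trace_def scalar_prod_def lessThan_atLeast0)
  also have "\<dots> = (\<Sum>j<n. \<Sum>i<n. B $$ (j, i) * A $$ (i, j))"
    by (subst sum.swap) (simp add: mult.commute)
  also have "\<dots> = mat_trace (B * A)"
    using assms by (simp add: mat_trace_def scalar_prod_def lessThan_atLeast0)
  finally show ?thesis .
qed

lemma Re_mat_trace_mult:
  assumes "Z \<in> carrier_mat d d" "M \<in> carrier_mat d d"
  shows "Re (mat_trace (Z * M)) =
    (\<Sum>i<d. \<Sum>j<d. Re (Z $$ (j, i)) * Re (M $$ (i, j)) - Im (Z $$ (j, i)) * Im (M $$ (i, j)))"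
proof -
  have "Re (mat_trace (Z * M)) =
      (\<Sum>j<d. \<Sum>i<d. Re (Z $$ (j, i)) * Re (M $$ (i, j)) - Im (Z $$ (j, i)) * Im (M $$ (i, j)))"
    using assms by (simp add: mat_trace_def scalar_prod_def lessThan_atLeast0 Re_sum)
  also have "\<dots> =
      (\<Sum>i<d. \<Sum>j<d. Re (Z $$ (j, i)) * Re (M $$ (i, j)) - Im (Z $$ (j, i)) * Im (M $$ (i, j)))"
    by (rule sum.swap)
  finally show ?thesis .
qed

lemma is_rep_carrier_mat: "is_rep G d \<rho> \<Longrightarrow> g \<in> carrier G \<Longrightarrow> \<rho> g \<in> carrier_mat d d"
  unfolding is_rep_def by blast

lemma in_R_iff_trace:
  assumes "is_rep G d \<rho>"
  shows "in_R G d \<rho> v \<longleftrightarrow> (\<exists>Z\<in>carrier_mat d d. \<forall>g\<in>carrier G. v g = Re (mat_trace (Z * \<rho> g)))"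
proof
  assume "in_R G d \<rho> v"
  then obtain c c' where v: "\<And>g. g \<in> carrier G \<Longrightarrow>
      v g = (\<Sum>i<d. \<Sum>j<d. c i j * Re (\<rho> g $$ (i, j)) + c' i j * Im (\<rho> g $$ (i, j)))"
    unfolding in_R_def by blast
  define Z where "Z = Matrix.mat d d (\<lambda>(j, i). Complex (c i j) (- c' i j))"
  have Z: "Z \<in> carrier_mat d d"
    by (simp add: Z_def)
  have "v g = Re (mat_trace (Z * \<rho> g))" if g: "g \<in> carrier G" for g
    unfolding v[OF g] Re_mat_trace_mult[OF Z is_rep_carrier_mat[OF assms g]] by (simp add: Z_def)
  with Z show "\<exists>Z\<in>carrier_mat d d. \<forall>g\<in>carrier G. v g = Re (mat_trace (Z * \<rho> g))"
    by blast
next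
  assume "\<exists>Z\<in>carrier_mat d d. \<forall>g\<in>carrier G. v g = Re (mat_trace (Z * \<rho> g))"
  then obtain Z where Z: "Z \<in> carrier_mat d d"
    and v: "\<And>g. g \<in> carrier G \<Longrightarrow> v g = Re (mat_trace (Z * \<rho> g))"
    by blast
  show "in_R G d \<rho> v"
    unfolding in_R_def
  proof (intro exI ballI)
    fix g assume g: "g \<in> carrier G"
    show "v g = (\<Sum>i<d. \<Sum>j<d.
        Re (Z $$ (j, i)) * Re (\<rho> g $$ (i, j)) + - Im (Z $$ (j, i)) * Im (\<rho> g $$ (i, j)))"
      unfolding v[OF g] Re_mat_trace_mult[OF Z is_rep_carrier_mat[OF assms g]] by simp
  qed
qed

lemma in_R_translate:
  assumes rep: "is_rep G d \<rho>" and "monoid G" and v: "in_R G d \<rho> v"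
    and a: "a \<in> carrier G" and b: "b \<in> carrier G"
  shows "in_R G d \<rho> (\<lambda>g. v (a \<otimes>\<^bsub>G\<^esub> g \<otimes>\<^bsub>G\<^esub> b))"
proof -
  interpret monoid G by fact
  obtain Z where Z: "Z \<in> carrier_mat d d" and vZ: "\<forall>g\<in>carrier G. v g = Re (mat_trace (Z * \<rho> g))"
    using v unfolding in_R_iff_trace[OF rep] by blast
  have ra: "\<rho> a \<in> carrier_mat d d" and rb: "\<rho> b \<in> carrier_mat d d"
    using is_rep_carrier_mat[OF rep] a b by auto
  have bZ: "\<rho> b * Z \<in> carrier_mat d d" and bZa: "\<rho> b * Z * \<rho> a \<in> carrier_mat d d"
    using Z ra rb by (metis mult_carrier_mat)+
  have "v (a \<otimes>\<^bsub>G\<^esub> g \<otimes>\<^bsub>G\<^esub> b) = Re (mat_trace (\<rho> b * Z * \<rho> a * \<rho> g))"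
    if g: "g \<in> carrier G" for g
  proof -
    have rg: "\<rho> g \<in> carrier_mat d d"
      using is_rep_carrier_mat[OF rep g] .
    have ag: "\<rho> a * \<rho> g \<in> carrier_mat d d" and Zag: "Z * (\<rho> a * \<rho> g) \<in> carrier_mat d d"
      using Z ra rg by (metis mult_carrier_mat)+
    have "\<rho> (a \<otimes>\<^bsub>G\<^esub> g \<otimes>\<^bsub>G\<^esub> b) = \<rho> a * \<rho> g * \<rho> b"
      using rep a b g unfolding is_rep_def by simp
    then have "v (a \<otimes>\<^bsub>G\<^esub> g \<otimes>\<^bsub>G\<^esub> b) = Re (mat_trace (Z * (\<rho> a * \<rho> g) * \<rho> b))"
      using vZ assoc_mult_mat[OF Z ag rb] a b g by simp
    also have "\<dots> = Re (mat_trace (\<rho> b * (Z * (\<rho> a * \<rho> g))))"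
      by (simp only: mat_trace_mult_comm[OF Zag rb])
    also have "\<dots> = Re (mat_trace (\<rho> b * Z * \<rho> a * \<rho> g))"
      by (simp only: assoc_mult_mat[OF bZ ra rg] assoc_mult_mat[OF rb Z ag])
    finally show ?thesis .
  qed
  with bZa show ?thesis
    unfolding in_R_iff_trace[OF rep] by blast
qed

lemma (in group) translate_inverse_cancel:
  assumes "a \<in> carrier G" "b \<in> carrier G" "g \<in> carrier G"
  shows "inv a \<otimes> (a \<otimes> g \<otimes> b) \<otimes> inv b = g" "a \<otimes> (inv a \<otimes> g \<otimes> inv b) \<otimes> b = g"
  using assms by (simp_all add: m_assoc[symmetric]) (simp_all add: m_assoc)

lemma (in group) sum_carrier_translate:
  assumes "a \<in> carrier G" "b \<in> carrier G"
  shows "(\<Sum>g\<in>carrier G. F (a \<otimes> g \<otimes> b)) = (\<Sum>g\<in>carrier G. F g)"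
  by (rule sum.reindex_bij_witness[where i="\<lambda>h. inv a \<otimes> h \<otimes> inv b" and j="\<lambda>g. a \<otimes> g \<otimes> b"])
    (use assms in \<open>simp_all add: translate_inverse_cancel\<close>)

locale translation_invariant_subspace = group G for G (structure) +
  fixes P :: "('a \<Rightarrow> real) \<Rightarrow> bool"
  assumes zero: "P (\<lambda>_. 0)"
    and add: "P v \<Longrightarrow> P w \<Longrightarrow> P (\<lambda>g. v g + w g)"
    and scale: "P v \<Longrightarrow> P (\<lambda>g. r * v g)"
    and cong: "P v \<Longrightarrow> (\<And>g. g \<in> carrier G \<Longrightarrow> v g = w g) \<Longrightarrow> P w"
    and translate: "P v \<Longrightarrow> a \<in> carrier G \<Longrightarrow> b \<in> carrier G \<Longrightarrow> P (\<lambda>g. v (a \<otimes> g \<otimes> b))"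
begin

lemma translate_left: "P v \<Longrightarrow> a \<in> carrier G \<Longrightarrow> P (\<lambda>g. v (a \<otimes> g))"
  by (erule cong[OF translate[of v a \<one>]]) auto

lemma translate_right: "P v \<Longrightarrow> b \<in> carrier G \<Longrightarrow> P (\<lambda>g. v (g \<otimes> b))"
  by (erule cong[OF translate[of v \<one> b]]) auto

lemma diff: "P v \<Longrightarrow> P w \<Longrightarrow> P (\<lambda>g. v g - w g)"
  using add[of v "\<lambda>g. (-1) * w g"] scale[of w "-1"] by simp

lemma linear_combination:
  assumes "finite X" "\<And>x. x \<in> X \<Longrightarrow> P (f x) \<or> k x = 0"
  shows "P (\<lambda>g. \<Sum>x\<in>X. k x * f x g)"
  using assms
proof (induction X rule: finite_induct)
  case empty
  then show ?case by (simp add: zero)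
next
  case (insert x X)
  have "P (\<lambda>g. k x * f x g)"
    using insert.prems zero scale by force
  then show ?case
    using insert add by simp
qed

lemma orthogonal_complement:
  "translation_invariant_subspace G (\<lambda>v. \<forall>f. P f \<longrightarrow> (\<Sum>g\<in>carrier G. v g * f g) = 0)"
proof unfold_locales
  fix v a b
  assume v: "\<forall>f. P f \<longrightarrow> (\<Sum>g\<in>carrier G. v g * f g) = 0"
    and a: "a \<in> carrier G" and b: "b \<in> carrier G"
  show "\<forall>f. P f \<longrightarrow> (\<Sum>g\<in>carrier G. v (a \<otimes> g \<otimes> b) * f g) = 0"
  proof (intro allI impI)
    fix f assume f: "P f"
    have "(\<Sum>g\<in>carrier G. v (a \<otimes> g \<otimes> b) * f g)
        = (\<Sum>g\<in>carrier G. (\<lambda>h. v h * f (inv a \<otimes> h \<otimes> inv b)) (a \<otimes> g \<otimes> b))"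
      using a b by (simp add: translate_inverse_cancel)
    also have "\<dots> = (\<Sum>h\<in>carrier G. v h * f (inv a \<otimes> h \<otimes> inv b))"
      using a b by (rule sum_carrier_translate)
    also have "\<dots> = 0"
      using v translate[OF f] a b by simp
    finally show "(\<Sum>g\<in>carrier G. v (a \<otimes> g \<otimes> b) * f g) = 0" .
  qed
qed (auto simp: distrib_right sum.distrib mult.assoc simp flip: sum_distrib_left cong: sum.cong)

end

lemma translation_invariant_subspace_in_R:
  assumes "group G" "is_rep G d \<rho>"
  shows "translation_invariant_subspace G (in_R G d \<rho>)"
proof (intro translation_invariant_subspace.intro[OF assms(1)] translation_invariant_subspace_axioms.intro)
  show "in_R G d \<rho> (\<lambda>_. 0)"
    unfolding in_R_def by (intro exI[of _ "\<lambda>i j. 0"]) simp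
next
  fix v w assume "in_R G d \<rho> v" "in_R G d \<rho> w"
  then obtain c c' e e' where
    v: "\<forall>g\<in>carrier G. v g = (\<Sum>i<d. \<Sum>j<d. c i j * Re (\<rho> g $$ (i, j)) + c' i j * Im (\<rho> g $$ (i, j)))" and
    w: "\<forall>g\<in>carrier G. w g = (\<Sum>i<d. \<Sum>j<d. e i j * Re (\<rho> g $$ (i, j)) + e' i j * Im (\<rho> g $$ (i, j)))"
    unfolding in_R_def by blast
  show "in_R G d \<rho> (\<lambda>g. v g + w g)"
    unfolding in_R_def
    by (intro exI[of _ "\<lambda>i j. c i j + e i j"] exI[of _ "\<lambda>i j. c' i j + e' i j"])
      (simp add: v w algebra_simps sum.distrib)
next
  fix v r assume "in_R G d \<rho> v"
  then obtain c c' where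
    v: "\<forall>g\<in>carrier G. v g = (\<Sum>i<d. \<Sum>j<d. c i j * Re (\<rho> g $$ (i, j)) + c' i j * Im (\<rho> g $$ (i, j)))"
    unfolding in_R_def by blast
  show "in_R G d \<rho> (\<lambda>g. r * v g)"
    unfolding in_R_def
    by (intro exI[of _ "\<lambda>i j. r * c i j"] exI[of _ "\<lambda>i j. r * c' i j"])
      (simp add: v algebra_simps sum_distrib_left)
next
  fix v w assume "in_R G d \<rho> v" "\<And>g. g \<in> carrier G \<Longrightarrow> v g = w g"
  then show "in_R G d \<rho> w"
    unfolding in_R_def by simp
next
  fix v a b assume "in_R G d \<rho> v" "a \<in> carrier G" "b \<in> carrier G"
  then show "in_R G d \<rho> (\<lambda>g. v (a \<otimes>\<^bsub>G\<^esub> g \<otimes>\<^bsub>G\<^esub> b))"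
    by (rule in_R_translate[OF assms(2) group.is_monoid[OF assms(1)]])
qed

lemma translation_invariant_subspace_in_Rperp:
  assumes "group G" "is_rep G d \<rho>"
  shows "translation_invariant_subspace G (in_Rperp G d \<rho>)"
proof -
  have "in_Rperp G d \<rho> = (\<lambda>v. \<forall>f. in_R G d \<rho> f \<longrightarrow> (\<Sum>g\<in>carrier G. v g * f g) = 0)"
    by (simp add: in_Rperp_def fun_eq_iff)
  then show ?thesis
    using translation_invariant_subspace.orthogonal_complement[OF translation_invariant_subspace_in_R[OF assms]]
    by simp
qed

lemma f_HD_update_A:
  assumes "i < m"
  shows "f_HD m (A(i := (A i)(a0 := t)), B, C) a b g
    = f_HD m (A, B, C) a b g + (if a = a0 then 1 else 0) * B i b * C i g * (t - A i a0)"
  using assms by (simp add: f_HD_def sum.remove[of "{..<m}" i] algebra_simps)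

lemma f_HD_update_B:
  assumes "i < m"
  shows "f_HD m (A, B(i := (B i)(b0 := t)), C) a b g
    = f_HD m (A, B, C) a b g + A i a * (if b = b0 then 1 else 0) * C i g * (t - B i b0)"
  using assms by (simp add: f_HD_def sum.remove[of "{..<m}" i] algebra_simps)

lemma f_HD_update_C:
  assumes "i < m"
  shows "f_HD m (A, B, C(i := (C i)(g0 := t))) a b g
    = f_HD m (A, B, C) a b g + A i a * B i b * (if g = g0 then 1 else 0) * (t - C i g0)"
  using assms by (simp add: f_HD_def sum.remove[of "{..<m}" i] algebra_simps)

lemma sum_f_HD_rank_one:
  "(\<Sum>a\<in>X. \<Sum>b\<in>Y. \<Sum>g\<in>Z. f_HD m (A, B, C) a b g * (\<alpha> a * \<beta> b * \<gamma> g))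
    = (\<Sum>j<m. (\<Sum>a\<in>X. A j a * \<alpha> a) * (\<Sum>b\<in>Y. B j b * \<beta> b) * (\<Sum>g\<in>Z. C j g * \<gamma> g))"
proof -
  have "(\<Sum>a\<in>X. \<Sum>b\<in>Y. \<Sum>g\<in>Z. f_HD m (A, B, C) a b g * (\<alpha> a * \<beta> b * \<gamma> g))
      = (\<Sum>a\<in>X. \<Sum>b\<in>Y. \<Sum>g\<in>Z. \<Sum>j<m. A j a * \<alpha> a * (B j b * \<beta> b) * (C j g * \<gamma> g))"
    by (simp add: f_HD_def sum_distrib_left mult_ac)
  also have "\<dots> = (\<Sum>j<m. \<Sum>a\<in>X. \<Sum>b\<in>Y. \<Sum>g\<in>Z. A j a * \<alpha> a * (B j b * \<beta> b) * (C j g * \<gamma> g))"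
    by (simp only: sum.swap[of _ _ "{..<m}"])
  also have "\<dots> = (\<Sum>j<m. (\<Sum>a\<in>X. A j a * \<alpha> a) * (\<Sum>b\<in>Y. B j b * \<beta> b) * (\<Sum>g\<in>Z. C j g * \<gamma> g))"
    by (simp only: sum_distrib_left[symmetric] sum_distrib_right[symmetric])
  finally show ?thesis .
qed

lemma deriv_loss_rank_one_update:
  assumes "group G" "finite (carrier G)"
    and update: "\<And>t a b g. f_HD m (W t) a b g = f_HD m (A, B, C) a b g + \<alpha> a * \<beta> b * \<gamma> g * (t - t0)"
  shows "deriv (\<lambda>t. loss G m (W t)) t0 = 2 / real (card (carrier G)) ^ 3 *
    ((\<Sum>j<m. (\<Sum>a\<in>carrier G. A j a * \<alpha> a) * (\<Sum>b\<in>carrier G. B j b * \<beta> b) * (\<Sum>g\<in>carrier G. C j g * \<gamma> g))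
     - (\<Sum>a\<in>carrier G. \<alpha> a * (\<Sum>b\<in>carrier G. \<beta> b * \<gamma> (a \<otimes>\<^bsub>G\<^esub> b))))"
proof -
  interpret group G by fact
  define c where "c = 1 / real (card (carrier G)) ^ 3"
  define e where "e a b g = f_HD m (A, B, C) a b g - (if g = a \<otimes>\<^bsub>G\<^esub> b then 1 else 0)" for a b g
  define q where "q a b g = \<alpha> a * \<beta> b * \<gamma> g" for a b g
  have loss: "(\<lambda>t. loss G m (W t))
      = (\<lambda>t. c * (\<Sum>a\<in>carrier G. \<Sum>b\<in>carrier G. \<Sum>g\<in>carrier G. (e a b g + q a b g * (t - t0))\<^sup>2))"
    by (simp add: fun_eq_iff loss_def update c_def e_def q_def algebra_simps)
  have "deriv (\<lambda>t. loss G m (W t)) t0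
      = c * (\<Sum>a\<in>carrier G. \<Sum>b\<in>carrier G. \<Sum>g\<in>carrier G. 2 * e a b g * q a b g)"
    unfolding loss by (rule DERIV_imp_deriv) (auto intro!: derivative_eq_intros simp: mult_ac)
  also have "\<dots> = 2 / real (card (carrier G)) ^ 3 *
      (\<Sum>a\<in>carrier G. \<Sum>b\<in>carrier G. \<Sum>g\<in>carrier G. e a b g * q a b g)"
    by (simp add: c_def sum_distrib_left mult.assoc)
  also have "(\<Sum>a\<in>carrier G. \<Sum>b\<in>carrier G. \<Sum>g\<in>carrier G. e a b g * q a b g)
      = (\<Sum>a\<in>carrier G. \<Sum>b\<in>carrier G. \<Sum>g\<in>carrier G. f_HD m (A, B, C) a b g * q a b g)
        - (\<Sum>a\<in>carrier G. \<Sum>b\<in>carrier G. q a b (a \<otimes>\<^bsub>G\<^esub> b))"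
    using assms(2)
    by (simp add: e_def left_diff_distrib sum_subtractf if_distrib[where f="\<lambda>y. y * x" for x]
        cong: if_cong)
  also have "(\<Sum>a\<in>carrier G. \<Sum>b\<in>carrier G. q a b (a \<otimes>\<^bsub>G\<^esub> b))
      = (\<Sum>a\<in>carrier G. \<alpha> a * (\<Sum>b\<in>carrier G. \<beta> b * \<gamma> (a \<otimes>\<^bsub>G\<^esub> b)))"
    by (simp add: q_def sum_distrib_left mult.assoc)
  finally show ?thesis
    unfolding q_def sum_f_HD_rank_one .
qed

lemma deriv_loss_A:
  assumes "group G" "finite (carrier G)" "i < m" "a0 \<in> carrier G"
  shows "deriv (\<lambda>t. loss G m (A(i := (A i)(a0 := t)), B, C)) (A i a0) =
    2 / real (card (carrier G)) ^ 3 *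
      ((\<Sum>j<m. A j a0 * (\<Sum>b\<in>carrier G. B j b * B i b) * (\<Sum>g\<in>carrier G. C j g * C i g))
       - (\<Sum>b\<in>carrier G. B i b * C i (a0 \<otimes>\<^bsub>G\<^esub> b)))"
  using assms
  by (subst deriv_loss_rank_one_update[where A=A and B=B and C=C
        and \<alpha>="\<lambda>a. if a = a0 then 1 else 0" and \<beta>="B i" and \<gamma>="C i"])
    (simp_all add: f_HD_update_A if_distrib[where f="\<lambda>y. x * y" for x]
      if_distrib[where f="\<lambda>y. y * x" for x] cong: if_cong)

lemma deriv_loss_B:
  assumes "group G" "finite (carrier G)" "i < m" "b0 \<in> carrier G"
  shows "deriv (\<lambda>t. loss G m (A, B(i := (B i)(b0 := t)), C)) (B i b0) =
    2 / real (card (carrier G)) ^ 3 *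
      ((\<Sum>j<m. (\<Sum>a\<in>carrier G. A j a * A i a) * B j b0 * (\<Sum>g\<in>carrier G. C j g * C i g))
       - (\<Sum>a\<in>carrier G. A i a * C i (a \<otimes>\<^bsub>G\<^esub> b0)))"
  using assms
  by (subst deriv_loss_rank_one_update[where A=A and B=B and C=C
        and \<alpha>="A i" and \<beta>="\<lambda>b. if b = b0 then 1 else 0" and \<gamma>="C i"])
    (simp_all add: f_HD_update_B if_distrib[where f="\<lambda>y. x * y" for x]
      if_distrib[where f="\<lambda>y. y * x" for x] cong: if_cong)

lemma deriv_loss_C:
  assumes "group G" "finite (carrier G)" "i < m" "g0 \<in> carrier G"
  shows "deriv (\<lambda>t. loss G m (A, B, C(i := (C i)(g0 := t)))) (C i g0) =
    2 / real (card (carrier G)) ^ 3 *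
      ((\<Sum>j<m. (\<Sum>a\<in>carrier G. A j a * A i a) * (\<Sum>b\<in>carrier G. B j b * B i b) * C j g0)
       - (\<Sum>a\<in>carrier G. A i a * B i (inv\<^bsub>G\<^esub> a \<otimes>\<^bsub>G\<^esub> g0)))"
proof -
  interpret group G by fact
  have "(\<Sum>b\<in>carrier G. B i b * (if a \<otimes>\<^bsub>G\<^esub> b = g0 then 1 else 0)) = B i (inv\<^bsub>G\<^esub> a \<otimes>\<^bsub>G\<^esub> g0)"
    if a: "a \<in> carrier G" for a
  proof -
    have "(\<Sum>b\<in>carrier G. B i b * (if a \<otimes>\<^bsub>G\<^esub> b = g0 then 1 else 0))
        = (\<Sum>b\<in>carrier G. if b = inv\<^bsub>G\<^esub> a \<otimes>\<^bsub>G\<^esub> g0 then B i b else 0)"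
      using a assms(4) by (intro sum.cong) (auto simp: inv_solve_left)
    then show ?thesis
      using a assms(2,4) by simp
  qed
  with assms show ?thesis
    by (subst deriv_loss_rank_one_update[where A=A and B=B and C=C
          and \<alpha>="A i" and \<beta>="B i" and \<gamma>="\<lambda>g. if g = g0 then 1 else 0"])
      (simp_all add: f_HD_update_C if_distrib[where f="\<lambda>y. x * y" for x] cong: if_cong)
qed

lemma GD_row_in_invariant_subspace:
  assumes P: "translation_invariant_subspace G P" and fin: "finite (carrier G)"
    and orth: "\<And>v w. Q v \<Longrightarrow> P w \<Longrightarrow> (\<Sum>g\<in>carrier G. v g * w g) = 0"
    and rows: "S \<union> T = {..<m}"
    and S: "\<And>j. j \<in> S \<Longrightarrow> P (A j) \<and> P (B j) \<and> P (C j)"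
    and T: "\<And>j. j \<in> T \<Longrightarrow> Q (A j) \<and> Q (B j) \<and> Q (C j)"
    and i: "i \<in> S" and GD: "GD G m \<eta> (A, B, C) = (A', B', C')"
  shows "P (A' i) \<and> P (B' i) \<and> P (C' i)"
proof -
  interpret translation_invariant_subspace G P by (rule P)
  have im: "i < m"
    using i rows by auto
  have PA: "P (A i)" and PB: "P (B i)" and PC: "P (C i)"
    using S[OF i] by auto
  have coupling: "P (\<lambda>g. \<Sum>j<m. (\<Sum>x\<in>carrier G. Y j x * Y i x) * K j * X j g)"
    if "X \<in> {A, B, C}" "Y \<in> {A, B, C}" for X Y K
  proof (rule linear_combination)
    fix j assume "j \<in> {..<m}"
    then consider "j \<in> S" | "j \<in> T"
      using rows by auto
    then show "P (X j) \<or> (\<Sum>x\<in>carrier G. Y j x * Y i x) * K j = 0"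
    proof cases
      case 1
      then show ?thesis using S that(1) by auto
    next
      case 2
      then have "(\<Sum>x\<in>carrier G. Y j x * Y i x) = 0"
        using orth T S[OF i] that(2) by auto
      then show ?thesis by simp
    qed
  qed simp
  define c where "c = 2 / real (card (carrier G)) ^ 3"
  have descent: "P (\<lambda>g. X g - \<eta> * D g)"
    if "P X" "P L" "P V" "\<And>g. g \<in> carrier G \<Longrightarrow> D g = c * (L g - V g)" for X L V D
    using cong[OF diff[OF that(1) scale[OF diff[OF that(2,3)], of "\<eta> * c"]]] that(4) by simp
  have GD': "A' = (\<lambda>i a. A i a - \<eta> * deriv (\<lambda>t. loss G m (A(i := (A i)(a := t)), B, C)) (A i a))"
    "B' = (\<lambda>i b. B i b - \<eta> * deriv (\<lambda>t. loss G m (A, B(i := (B i)(b := t)), C)) (B i b))"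
    "C' = (\<lambda>i g. C i g - \<eta> * deriv (\<lambda>t. loss G m (A, B, C(i := (C i)(g := t)))) (C i g))"
    using GD by (auto simp: GD_def)
  have "P (A' i)"
    unfolding GD'
  proof (rule descent[OF PA coupling[of A B "\<lambda>j. \<Sum>g\<in>carrier G. C j g * C i g"]])
    show "P (\<lambda>a. \<Sum>b\<in>carrier G. B i b * C i (a \<otimes>\<^bsub>G\<^esub> b))"
      using PC fin by (intro linear_combination) (auto intro: translate_right)
  qed (auto simp: deriv_loss_A[OF is_group fin im] c_def mult_ac)
  moreover have "P (B' i)"
    unfolding GD'
  proof (rule descent[OF PB coupling[of B A "\<lambda>j. \<Sum>g\<in>carrier G. C j g * C i g"]])
    show "P (\<lambda>b. \<Sum>a\<in>carrier G. A i a * C i (a \<otimes>\<^bsub>G\<^esub> b))"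
      using PC fin by (intro linear_combination) (auto intro: translate_left)
  qed (auto simp: deriv_loss_B[OF is_group fin im] c_def mult_ac)
  moreover have "P (C' i)"
    unfolding GD'
  proof (rule descent[OF PC coupling[of C A "\<lambda>j. \<Sum>b\<in>carrier G. B j b * B i b"]])
    show "P (\<lambda>g. \<Sum>a\<in>carrier G. A i a * B i (inv\<^bsub>G\<^esub> a \<otimes>\<^bsub>G\<^esub> g))"
      using PB fin by (intro linear_combination) (auto intro: translate_left)
  qed (auto simp: deriv_loss_C[OF is_group fin im] c_def mult_ac)
  ultimately show ?thesis by blast
qed

lemma rows_split_GD:
  assumes "group G" "finite (carrier G)" "is_rep G d \<rho>"
    and rows: "S1 \<union> S2 = {..<m}" and split: "rows_split G d \<rho> S1 S2 W"
  shows "rows_split G d \<rho> S1 S2 (GD G m \<eta> W)"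
proof -
  obtain A B C where W: "W = (A, B, C)"
    by (cases W)
  obtain A' B' C' where GD: "GD G m \<eta> (A, B, C) = (A', B', C')"
    by (cases "GD G m \<eta> (A, B, C)")
  have S1: "\<And>j. j \<in> S1 \<Longrightarrow> in_R G d \<rho> (A j) \<and> in_R G d \<rho> (B j) \<and> in_R G d \<rho> (C j)"
    and S2: "\<And>j. j \<in> S2 \<Longrightarrow> in_Rperp G d \<rho> (A j) \<and> in_Rperp G d \<rho> (B j) \<and> in_Rperp G d \<rho> (C j)"
    using split by (auto simp: rows_split_def W)
  have orth: "(\<Sum>g\<in>carrier G. v g * w g) = 0" if "in_Rperp G d \<rho> v" "in_R G d \<rho> w" for v w
    using that by (simp add: in_Rperp_def)
  have orth': "(\<Sum>g\<in>carrier G. v g * w g) = 0" if "in_R G d \<rho> v" "in_Rperp G d \<rho> w" for v w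
    using orth[OF that(2,1)] by (simp add: mult.commute)
  have rows': "S2 \<union> S1 = {..<m}"
    using rows by auto
  have "in_R G d \<rho> (A' i) \<and> in_R G d \<rho> (B' i) \<and> in_R G d \<rho> (C' i)" if "i \<in> S1" for i
    by (rule GD_row_in_invariant_subspace[OF translation_invariant_subspace_in_R[OF assms(1,3)]
          assms(2) orth rows S1 S2 that GD])
  moreover have "in_Rperp G d \<rho> (A' i) \<and> in_Rperp G d \<rho> (B' i) \<and> in_Rperp G d \<rho> (C' i)" if "i \<in> S2" for i
    by (rule GD_row_in_invariant_subspace[OF translation_invariant_subspace_in_Rperp[OF assms(1,3)]
          assms(2) orth' rows' S2 S1 that GD])
  ultimately show ?thesis
    by (simp add: rows_split_def W GD)
qed

theorem mainTheorem13:
  fixes G :: "('a, 'b) monoid_scheme" and d m :: nat and \<rho> :: "'a \<Rightarrow> complex mat"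
    and S1 S2 :: "nat set" and W :: "'a weights" and \<eta> :: real
  assumes "group G" and "finite (carrier G)"
    and "is_rep G d \<rho>" and "self_conjugate G d \<rho>"
    and "S1 \<union> S2 = {..<m}" and "S1 \<inter> S2 = {}"
    and "rows_split G d \<rho> S1 S2 W"
    and "\<eta> > 0"
  shows "rows_split G d \<rho> S1 S2 (GD G m \<eta> W) \<and>
         (\<forall>t::nat. rows_split G d \<rho> S1 S2 ((GD G m \<eta> ^^ t) W))"
proof -
  have step: "\<And>W. rows_split G d \<rho> S1 S2 W \<Longrightarrow> rows_split G d \<rho> S1 S2 (GD G m \<eta> W)"
    by (rule rows_split_GD[OF assms(1-3,5)])
  have "rows_split G d \<rho> S1 S2 ((GD G m \<eta> ^^ t) W)" for t
    by (induction t) (simp_all add: assms(7) step)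
  with step assms(7) show ?thesis
    by blast
qed

end
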